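(* Let $a\ge1$ be an integer and $R>0$. For $\zeta\in D^a_R$ the function $\mathcal{R}^a(\zeta)(t)=\zeta(t)t^a+a\int_t^\infty\zeta(s)s^{a-1}ds$, $t>0$, extends continuously to $[0,\infty)$, and the resulting map $\mathcal{R}^a:D^a_R\to C_{c,R}([0,\infty))$ is a topological isomorphism (a continuous linear bijection with continuous inverse).
   Context: $C_b((0,\infty))$: continuous functions on $(0,\infty)$ with support bounded above. $D^a_R$: the set of $\zeta\in C_b((0,\infty))$ with support in $(0,R]$, $\lim_{t\to0}t^a\zeta(t)=0$, and $\lim_{t\to0}\int_t^\infty\zeta(r)r^{a-1}dr$ existing and finite, with norm $\|\zeta\|_{D^a}=\sup_{t>0}t^a|\zeta(t)|+\sup_{t>0}|\int_t^\infty\zeta(r)r^{a-1}dr|$. $C_{c,R}([0,\infty))$: continuous functions on $[0,\infty)$ supported in $[0,R]$, with the maximum norm. *)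

theory Defs
  imports "HOL-Analysis.Analysis"
begin

text \<open>Functions on (0,infinity) resp. [0,infinity) are represented as real => real,
  normalised to be 0 outside their domain (t <= 0, resp. t < 0).\<close>

definition tailint :: "nat \<Rightarrow> (real \<Rightarrow> real) \<Rightarrow> real \<Rightarrow> real" where
  "tailint a \<zeta> t = integral {t..} (\<lambda>r. \<zeta> r * r ^ (a - 1))"

definition Dspace :: "nat \<Rightarrow> real \<Rightarrow> (real \<Rightarrow> real) set" where
  "Dspace a R = {\<zeta>. continuous_on {0<..} \<zeta>
      \<and> (\<forall>t. t \<le> 0 \<longrightarrow> \<zeta> t = 0)
      \<and> (\<forall>t. t > R \<longrightarrow> \<zeta> t = 0)
      \<and> ((\<lambda>t. t ^ a * \<zeta> t) \<longlongrightarrow> 0) (at_right 0)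
      \<and> (\<exists>L. (tailint a \<zeta> \<longlongrightarrow> L) (at_right 0))}"

definition Dnorm :: "nat \<Rightarrow> (real \<Rightarrow> real) \<Rightarrow> real" where
  "Dnorm a \<zeta> = (SUP t\<in>{0<..}. \<bar>t ^ a * \<zeta> t\<bar>) + (SUP t\<in>{0<..}. \<bar>tailint a \<zeta> t\<bar>)"

definition Ccspace :: "real \<Rightarrow> (real \<Rightarrow> real) set" where
  "Ccspace R = {f. continuous_on {0..} f
      \<and> (\<forall>t. t < 0 \<longrightarrow> f t = 0)
      \<and> (\<forall>t. t > R \<longrightarrow> f t = 0)}"

definition supnorm :: "(real \<Rightarrow> real) \<Rightarrow> real" where
  "supnorm f = (SUP t\<in>{0..}. \<bar>f t\<bar>)"

definition Rmap :: "nat \<Rightarrow> (real \<Rightarrow> real) \<Rightarrow> real \<Rightarrow> real" where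
  "Rmap a \<zeta> t = \<zeta> t * t ^ a + real a * tailint a \<zeta> t"

definition Rext :: "nat \<Rightarrow> (real \<Rightarrow> real) \<Rightarrow> real \<Rightarrow> real" where
  "Rext a \<zeta> t = (if t > 0 then Rmap a \<zeta> t
      else if t = 0 then Lim (at_right 0) (Rmap a \<zeta>) else 0)"

end

theory Submission
  imports Defs
begin

text \<open>Write \<open>T \<zeta> t = \<integral>\<^sub>t\<^sup>\<infinity> \<zeta>(s) s\<^sup>a\<^sup>-\<^sup>1 ds\<close> (the constant \<open>tailint\<close>). Since \<open>T' = -\<zeta> t\<^sup>a\<^sup>-\<^sup>1\<close>,
  the map is \<open>R\<^sup>a \<zeta> = -t\<^sup>a\<^sup>+\<^sup>1 (T \<zeta> / t\<^sup>a)'\<close>. Hence \<open>R\<^sup>a \<zeta> = 0\<close> forces \<open>T \<zeta> / t\<^sup>a\<close> to be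
  constant, hence zero because it vanishes beyond \<open>R\<close>, and then \<open>\<zeta> = 0\<close>. Conversely
  \<open>R\<^sup>a \<zeta> = f\<close> is solved by \<open>T \<zeta> = t\<^sup>a P f\<close> with \<open>P f t = \<integral>\<^sub>t\<^sup>\<infinity> f(s) s\<^sup>-\<^sup>a\<^sup>-\<^sup>1 ds\<close> (\<open>inv_tail\<close>), i.e. by
  \<open>\<zeta> = f / t\<^sup>a - a P f\<close>; L'Hopital's rule gives \<open>t\<^sup>a P f t \<rightarrow> f(0)/a\<close>, so this \<open>\<zeta>\<close> lies in
  \<open>D\<^sup>a\<^sub>R\<close>. The estimates \<open>|R\<^sup>a \<zeta>| \<le> (1 + a) \<parallel>\<zeta>\<parallel>\<close> and \<open>|t\<^sup>a P f t| \<le> \<parallel>f\<parallel> / a\<close> give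
  continuity of the map and of its inverse.\<close>

section \<open>Tail integrals and calculus on the half-line\<close>

lemma has_integral_Ici_if_vanishing:
  fixes g :: "real \<Rightarrow> real"
  assumes g: "continuous_on {0<..} g" "\<And>r. r > R \<Longrightarrow> g r = 0"
    and t: "0 < t" "t \<le> b" "R \<le> b"
  shows "(g has_integral integral {t..b} g) {t..}"
proof -
  have "continuous_on {t..b} g"
    using t by (intro continuous_on_subset[OF g(1)]) auto
  then have "(g has_integral integral {t..b} g) {t..b}"
    using integrable_continuous_interval integrable_integral by blast
  then have "((\<lambda>x. if t \<le> x then g x else 0) has_integral integral {t..b} g) {t..b}"
    by (rule has_integral_eq[rotated]) auto
  then have "((\<lambda>x. if t \<le> x then g x else 0) has_integral integral {t..b} g) {t..}"
    by (rule has_integral_on_superset) (use g(2) t in auto)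
  then show ?thesis
    by (rule has_integral_eq[rotated]) auto
qed

lemma integrable_Ici_if_vanishing:
  fixes g :: "real \<Rightarrow> real"
  assumes "continuous_on {0<..} g" "\<And>r. r > R \<Longrightarrow> g r = 0" "0 < t"
  shows "g integrable_on {t..}"
  using has_integral_Ici_if_vanishing[OF assms max.cobounded1 max.cobounded2] by blast

lemma integral_Ici_vanishing:
  fixes g :: "real \<Rightarrow> real"
  assumes "\<And>r. r > R \<Longrightarrow> g r = 0" "R < t"
  shows "integral {t..} g = 0"
  using integral_cong[of "{t..}" g "\<lambda>_. 0"] assms by simp

lemma has_real_derivative_integral_Ici:
  fixes g :: "real \<Rightarrow> real"
  assumes g: "continuous_on {0<..} g" "\<And>r. r > R \<Longrightarrow> g r = 0" and t: "0 < t"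
  shows "((\<lambda>x. integral {x..} g) has_real_derivative - g t) (at t)"
proof -
  define b where "b = max R t + 1"
  have "continuous_on {t/2..b} g"
    using t by (intro continuous_on_subset[OF g(1)]) auto
  then have "((\<lambda>x. integral {x..b} g) has_real_derivative - g t) (at t within {t/2..b})"
    by (rule integral_has_real_derivative') (use t in \<open>auto simp: b_def\<close>)
  then have "((\<lambda>x. integral {x..b} g) has_real_derivative - g t) (at t)"
    using at_within_interior[of t "{t/2..b}"] t by (auto simp: b_def)
  then show ?thesis
  proof (rule has_field_derivative_transform_within_open[where S = "{t/2<..<b}"])
    fix x assume "x \<in> {t/2<..<b}"
    then have "(g has_integral integral {x..b} g) {x..}"
      by (intro has_integral_Ici_if_vanishing[OF g]) (use t in \<open>auto simp: b_def\<close>)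
    then show "integral {x..b} g = integral {x..} g"
      by (simp add: integral_unique)
  qed (use t in \<open>auto simp: b_def\<close>)
qed

lemma eq_0_if_DERIV_0_and_vanishing:
  fixes h :: "real \<Rightarrow> real"
  assumes "\<And>x. x > 0 \<Longrightarrow> (h has_real_derivative 0) (at x)" "\<And>x. x > R \<Longrightarrow> h x = 0"
    and "t > 0"
  shows "h t = 0"
proof -
  obtain c where c: "\<forall>x\<in>{0<..}. h x = c"
    using has_field_derivative_zero_constant[of "{0<..}" h] assms(1)
    by (auto simp: convex_real_interval intro: has_field_derivative_at_within)
  have "h (max R 0 + 1) = 0" by (rule assms(2)) simp
  moreover have "h (max R 0 + 1) = c" using c by simp
  ultimately show ?thesis using c assms(3) by simp
qed

lemma abs_le_if_DERIV_dominated: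
  fixes F G :: "real \<Rightarrow> real"
  assumes "t \<le> b"
    and F: "\<And>s. t \<le> s \<Longrightarrow> s \<le> b \<Longrightarrow> (F has_real_derivative F' s) (at s)"
    and G: "\<And>s. t \<le> s \<Longrightarrow> s \<le> b \<Longrightarrow> (G has_real_derivative G' s) (at s)"
    and dom: "\<And>s. t \<le> s \<Longrightarrow> s \<le> b \<Longrightarrow> \<bar>F' s\<bar> \<le> - G' s"
    and "F b = 0" "G b \<ge> 0"
  shows "\<bar>F t\<bar> \<le> G t"
proof -
  have "G b + F b \<le> G t + F t"
  proof (rule DERIV_nonpos_imp_nonincreasing[OF \<open>t \<le> b\<close>])
    fix s assume "t \<le> s" "s \<le> b"
    then show "\<exists>y. ((\<lambda>s. G s + F s) has_real_derivative y) (at s) \<and> y \<le> 0"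
      using DERIV_add[OF G F] dom by fastforce
  qed
  moreover have "G b - F b \<le> G t - F t"
  proof (rule DERIV_nonpos_imp_nonincreasing[OF \<open>t \<le> b\<close>])
    fix s assume "t \<le> s" "s \<le> b"
    then show "\<exists>y. ((\<lambda>s. G s - F s) has_real_derivative y) (at s) \<and> y \<le> 0"
      using DERIV_diff[OF G F] dom by fastforce
  qed
  ultimately show ?thesis using assms(5,6) by linarith
qed

lemma DERIV_inverse_power:
  fixes s :: real
  assumes "s \<noteq> 0"
  shows "((\<lambda>s. inverse (s ^ a)) has_real_derivative - (real a / s ^ (a + 1))) (at s)"
proof -
  have "((\<lambda>s. inverse (s ^ a)) has_real_derivative
      - (real a * s ^ (a - 1) * inverse ((s ^ a) ^ Suc (Suc 0)))) (at s)"
    using DERIV_inverse_fun[OF DERIV_pow] assms by simp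
  moreover have "real a * s ^ (a - 1) * inverse ((s ^ a) ^ Suc (Suc 0)) = real a / s ^ (a + 1)"
    using assms by (cases a) (simp_all add: field_simps power2_eq_square)
  ultimately show ?thesis by simp
qed

lemma bdd_above_abs_pos_if_tendsto_at_right_0:
  fixes g :: "real \<Rightarrow> real"
  assumes g: "continuous_on {0<..} g" "(g \<longlongrightarrow> L) (at_right 0)" "\<And>t. t > R \<Longrightarrow> g t = 0"
  shows "bdd_above ((\<lambda>t. \<bar>g t\<bar>) ` {0<..})"
proof -
  obtain d where d: "d > 0" "\<And>t. 0 < t \<Longrightarrow> t < d \<Longrightarrow> dist (g t) L < 1"
    using tendstoD[OF g(2), of 1] by (auto simp: eventually_at_right_field)
  have "compact (g ` {d..R})"
    using d(1) by (intro compact_continuous_image continuous_on_subset[OF g(1)]) auto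
  then obtain B where B: "\<And>t. t \<in> {d..R} \<Longrightarrow> \<bar>g t\<bar> \<le> B"
    using compact_imp_bounded by (fastforce simp: bounded_iff)
  have "\<bar>g t\<bar> \<le> max (\<bar>L\<bar> + 1) (max B 0)" if "t > 0" for t
    using d(2)[of t] B[of t] g(3)[of t] that by (fastforce simp: dist_real_def)
  then show ?thesis by (intro bdd_aboveI2) simp
qed

lemma ex_delta_if_le_mult:
  fixes N1 N2 :: "'a \<Rightarrow> real"
  assumes "K > 0" "\<epsilon> > 0" and le: "\<And>y. y \<in> A \<Longrightarrow> N2 y \<le> K * N1 y"
  shows "\<exists>\<delta>>0. \<forall>y\<in>A. N1 y < \<delta> \<longrightarrow> N2 y < \<epsilon>"
proof (intro exI conjI ballI impI)
  show "\<epsilon> / K > 0" using assms(1,2) by simp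
  fix y assume "y \<in> A" "N1 y < \<epsilon> / K"
  then have "K * N1 y < \<epsilon>" using \<open>K > 0\<close> by (simp add: field_simps)
  then show "N2 y < \<epsilon>" using le[OF \<open>y \<in> A\<close>] by linarith
qed

section \<open>The space \<open>D\<^sup>a\<^sub>R\<close> and the map \<open>R\<^sup>a\<close>\<close>

lemma has_real_derivative_tailint:
  assumes "continuous_on {0<..} \<zeta>" "\<And>r. r > R \<Longrightarrow> \<zeta> r = 0" "t > 0"
  shows "(tailint a \<zeta> has_real_derivative - (\<zeta> t * t ^ (a - 1))) (at t)"
  unfolding tailint_def[abs_def]
  by (rule has_real_derivative_integral_Ici[where R = R]) (use assms in \<open>auto intro!: continuous_intros\<close>)

lemma tailint_vanishing: "(\<And>r. r > R \<Longrightarrow> \<zeta> r = 0) \<Longrightarrow> t > R \<Longrightarrow> tailint a \<zeta> t = 0"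
  unfolding tailint_def by (rule integral_Ici_vanishing[where R = R]) auto

lemma continuous_on_tailint:
  assumes "continuous_on {0<..} \<zeta>" "\<And>r. r > R \<Longrightarrow> \<zeta> r = 0"
  shows "continuous_on {0<..} (tailint a \<zeta>)"
  by (intro continuous_at_imp_continuous_on ballI DERIV_isCont[OF has_real_derivative_tailint[OF assms]]) auto

lemma
  assumes "\<zeta> \<in> Dspace a R"
  shows Dspace_continuous_on: "continuous_on {0<..} \<zeta>"
    and Dspace_nonpos: "t \<le> 0 \<Longrightarrow> \<zeta> t = 0"
    and Dspace_beyond: "t > R \<Longrightarrow> \<zeta> t = 0"
    and Dspace_tendsto_power_mult: "((\<lambda>t. t ^ a * \<zeta> t) \<longlongrightarrow> 0) (at_right 0)"
    and Dspace_tailint_convergent: "\<exists>L. (tailint a \<zeta> \<longlongrightarrow> L) (at_right 0)"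
  using assms by (auto simp: Dspace_def)

lemma tailint_lincomb:
  assumes "\<zeta> \<in> Dspace a R" "\<eta> \<in> Dspace a R" "t > 0"
  shows "tailint a (\<lambda>t. c * \<zeta> t + \<eta> t) t = c * tailint a \<zeta> t + tailint a \<eta> t"
proof -
  have integrable: "(\<lambda>r. \<xi> r * r ^ (a - 1)) integrable_on {t..}" if "\<xi> \<in> Dspace a R" for \<xi>
    by (rule integrable_Ici_if_vanishing[where R = R])
      (use that assms(3) in \<open>auto intro!: continuous_intros Dspace_continuous_on[OF that]
        simp: Dspace_beyond\<close>)
  have "integral {t..} (\<lambda>r. c * (\<zeta> r * r ^ (a - 1)) + \<eta> r * r ^ (a - 1))
      = c * integral {t..} (\<lambda>r. \<zeta> r * r ^ (a - 1)) + integral {t..} (\<lambda>r. \<eta> r * r ^ (a - 1))"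
    using integral_add[OF integrable_on_cmult_left[OF integrable[OF assms(1)]] integrable[OF assms(2)]]
    by simp
  then show ?thesis
    unfolding tailint_def by (simp add: distrib_right mult.assoc)
qed

lemma Dspace_lincomb:
  assumes "\<zeta> \<in> Dspace a R" "\<eta> \<in> Dspace a R"
  shows "(\<lambda>t. c * \<zeta> t + \<eta> t) \<in> Dspace a R"
proof -
  obtain L1 L2 where "(tailint a \<zeta> \<longlongrightarrow> L1) (at_right 0)" "(tailint a \<eta> \<longlongrightarrow> L2) (at_right 0)"
    using assms Dspace_tailint_convergent by metis
  then have "((\<lambda>t. c * tailint a \<zeta> t + tailint a \<eta> t) \<longlongrightarrow> c * L1 + L2) (at_right 0)"
    by (intro tendsto_intros)
  then have "(tailint a (\<lambda>t. c * \<zeta> t + \<eta> t) \<longlongrightarrow> c * L1 + L2) (at_right 0)"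
    by (rule Lim_transform_eventually)
      (use eventually_at_right_less[of "0::real"] in \<open>auto elim: eventually_mono
        simp: tailint_lincomb[OF assms]\<close>)
  moreover have "((\<lambda>t. c * (t ^ a * \<zeta> t) + t ^ a * \<eta> t) \<longlongrightarrow> c * 0 + 0) (at_right 0)"
    by (intro tendsto_intros Dspace_tendsto_power_mult[OF assms(1)] Dspace_tendsto_power_mult[OF assms(2)])
  ultimately show ?thesis
    using assms unfolding Dspace_def by (auto intro!: continuous_intros simp: algebra_simps)
qed

lemma Dspace_diff: "\<zeta> \<in> Dspace a R \<Longrightarrow> \<eta> \<in> Dspace a R \<Longrightarrow> (\<lambda>t. \<eta> t - \<zeta> t) \<in> Dspace a R"
  using Dspace_lincomb[of \<zeta> a R \<eta> "-1"] by simp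

lemma Rmap_lincomb:
  assumes "\<zeta> \<in> Dspace a R" "\<eta> \<in> Dspace a R" "t > 0"
  shows "Rmap a (\<lambda>t. c * \<zeta> t + \<eta> t) t = c * Rmap a \<zeta> t + Rmap a \<eta> t"
  using tailint_lincomb[OF assms] by (simp add: Rmap_def algebra_simps)

lemma isCont_Rmap:
  assumes "\<zeta> \<in> Dspace a R" "t > 0"
  shows "isCont (Rmap a \<zeta>) t"
proof -
  have "isCont \<zeta> t"
    using Dspace_continuous_on[OF assms(1)] assms(2)
    by (simp add: continuous_on_eq_continuous_at)
  moreover have "isCont (tailint a \<zeta>) t"
    by (rule DERIV_isCont[OF has_real_derivative_tailint[where R = R]])
      (use assms Dspace_continuous_on Dspace_beyond in auto)
  ultimately show ?thesis unfolding Rmap_def[abs_def] by (intro continuous_intros)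
qed

lemma Rext_0_eq: "(Rmap a \<zeta> \<longlongrightarrow> L) (at_right 0) \<Longrightarrow> Rext a \<zeta> 0 = L"
  unfolding Rext_def by (simp add: tendsto_Lim trivial_limit_at_right_real)

lemma tendsto_Rmap:
  assumes "\<zeta> \<in> Dspace a R"
  shows "(Rmap a \<zeta> \<longlongrightarrow> Rext a \<zeta> 0) (at_right 0)"
proof -
  obtain L where "(tailint a \<zeta> \<longlongrightarrow> L) (at_right 0)"
    using Dspace_tailint_convergent[OF assms] by blast
  then have "((\<lambda>t. t ^ a * \<zeta> t + real a * tailint a \<zeta> t) \<longlongrightarrow> 0 + real a * L) (at_right 0)"
    by (intro tendsto_intros Dspace_tendsto_power_mult[OF assms])
  then have "(Rmap a \<zeta> \<longlongrightarrow> real a * L) (at_right 0)"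
    by (simp add: Rmap_def[abs_def] mult.commute)
  then show ?thesis using Rext_0_eq by metis
qed

lemma tendsto_Rext_at_right_0:
  assumes "\<zeta> \<in> Dspace a R"
  shows "(Rext a \<zeta> \<longlongrightarrow> Rext a \<zeta> 0) (at_right 0)"
  using tendsto_Rmap[OF assms] by (rule Lim_transform_eventually)
    (use eventually_at_right_less[of "0::real"] in \<open>auto elim: eventually_mono simp: Rext_def\<close>)

lemma Rext_eqI:
  assumes "\<And>t. t > 0 \<Longrightarrow> Rmap a \<zeta> t = f t" "(f \<longlongrightarrow> f 0) (at_right 0)" "\<And>t. t < 0 \<Longrightarrow> f t = 0"
  shows "Rext a \<zeta> = f"
proof
  fix t :: real
  have "(Rmap a \<zeta> \<longlongrightarrow> f 0) (at_right 0)"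
    using assms(2) by (rule Lim_transform_eventually)
      (use eventually_at_right_less[of "0::real"] in \<open>auto elim: eventually_mono simp: assms(1)\<close>)
  then show "Rext a \<zeta> t = f t"
    using assms(1,3) Rext_0_eq by (cases t "0::real" rule: linorder_cases) (auto simp: Rext_def)
qed

lemma Rext_in_Ccspace:
  assumes "\<zeta> \<in> Dspace a R" "R \<ge> 0"
  shows "Rext a \<zeta> \<in> Ccspace R"
proof -
  have "continuous (at x within {0..}) (Rext a \<zeta>)" if "x \<ge> 0" for x
  proof (cases "x = 0")
    case True
    then show ?thesis
      using tendsto_Rext_at_right_0[OF assms(1)] by (simp add: continuous_within at_within_Ici_at_right)
  next
    case False
    then have "x > 0" using that by simp
    have "\<forall>\<^sub>F t in nhds x. Rmap a \<zeta> t = Rext a \<zeta> t"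
      using eventually_nhds_in_open[of "{0<..}" x] \<open>x > 0\<close> by (auto elim: eventually_mono simp: Rext_def)
    then have "isCont (Rext a \<zeta>) x"
      using isCont_Rmap[OF assms(1) \<open>x > 0\<close>] isCont_cong by blast
    then show ?thesis by (rule continuous_at_imp_continuous_within)
  qed
  moreover have "Rext a \<zeta> t = 0" if "t > R" for t
    using that assms tailint_vanishing[of R \<zeta> t a] Dspace_beyond[OF assms(1)]
    by (auto simp: Rext_def Rmap_def)
  ultimately show ?thesis
    unfolding Ccspace_def by (auto simp: continuous_on_eq_continuous_within Rext_def)
qed

lemma Rext_lincomb:
  assumes "\<zeta> \<in> Dspace a R" "\<eta> \<in> Dspace a R"
  shows "Rext a (\<lambda>t. c * \<zeta> t + \<eta> t) = (\<lambda>t. c * Rext a \<zeta> t + Rext a \<eta> t)"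
proof (rule Rext_eqI)
  show "Rmap a (\<lambda>t. c * \<zeta> t + \<eta> t) t = c * Rext a \<zeta> t + Rext a \<eta> t" if "t > 0" for t
    using that by (simp add: Rmap_lincomb[OF assms] Rext_def)
  show "((\<lambda>t. c * Rext a \<zeta> t + Rext a \<eta> t) \<longlongrightarrow> c * Rext a \<zeta> 0 + Rext a \<eta> 0) (at_right 0)"
    by (intro tendsto_intros tendsto_Rext_at_right_0[OF assms(1)] tendsto_Rext_at_right_0[OF assms(2)])
qed (simp add: Rext_def)

lemma Rext_diff:
  "\<zeta> \<in> Dspace a R \<Longrightarrow> \<eta> \<in> Dspace a R \<Longrightarrow> Rext a (\<lambda>t. \<eta> t - \<zeta> t) = (\<lambda>t. Rext a \<eta> t - Rext a \<zeta> t)"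
  using Rext_lincomb[of \<zeta> a R \<eta> "-1"] by simp

lemma has_real_derivative_tailint_div_power:
  assumes "\<zeta> \<in> Dspace a R" "a \<ge> 1" "t > 0"
  shows "((\<lambda>t. tailint a \<zeta> t * inverse (t ^ a)) has_real_derivative - (Rmap a \<zeta> t / t ^ (a + 1))) (at t)"
proof -
  have "((\<lambda>t. tailint a \<zeta> t * inverse (t ^ a)) has_real_derivative
      tailint a \<zeta> t * - (real a / t ^ (a + 1)) + - (\<zeta> t * t ^ (a - 1)) * inverse (t ^ a)) (at t)"
    by (intro DERIV_mult' has_real_derivative_tailint[where R = R] DERIV_inverse_power)
      (use assms Dspace_continuous_on Dspace_beyond in auto)
  moreover have "tailint a \<zeta> t * - (real a / t ^ (a + 1)) + - (\<zeta> t * t ^ (a - 1)) * inverse (t ^ a)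
      = - (Rmap a \<zeta> t / t ^ (a + 1))"
    using assms(2,3) by (cases a) (auto simp: Rmap_def field_simps)
  ultimately show ?thesis by simp
qed

lemma Dspace_eq_0_if_Rmap_eq_0:
  assumes "\<zeta> \<in> Dspace a R" "a \<ge> 1" and Rmap0: "\<And>t. t > 0 \<Longrightarrow> Rmap a \<zeta> t = 0"
  shows "\<zeta> t = 0"
proof (cases "t > 0")
  case True
  have "tailint a \<zeta> t * inverse (t ^ a) = 0"
  proof (rule eq_0_if_DERIV_0_and_vanishing[where h = "\<lambda>t. tailint a \<zeta> t * inverse (t ^ a)" and R = R])
    show "((\<lambda>t. tailint a \<zeta> t * inverse (t ^ a)) has_real_derivative 0) (at x)" if "x > 0" for x
      using has_real_derivative_tailint_div_power[OF assms(1,2) that] Rmap0[OF that] by simp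
  qed (use True tailint_vanishing Dspace_beyond[OF assms(1)] in auto)
  then have "tailint a \<zeta> t = 0" using True by simp
  then show ?thesis using Rmap0[OF True] True by (simp add: Rmap_def)
qed (use Dspace_nonpos[OF assms(1)] in simp)

lemma inj_on_Rext:
  assumes "a \<ge> 1"
  shows "inj_on (Rext a) (Dspace a R)"
proof (rule inj_onI)
  fix \<zeta> \<eta> assume D: "\<zeta> \<in> Dspace a R" "\<eta> \<in> Dspace a R" and eq: "Rext a \<zeta> = Rext a \<eta>"
  have "Rmap a (\<lambda>t. \<eta> t - \<zeta> t) t = 0" if "t > 0" for t
    using fun_cong[OF Rext_diff[OF D], of t] eq that by (simp add: Rext_def)
  then have "\<eta> t - \<zeta> t = 0" for t
    by (rule Dspace_eq_0_if_Rmap_eq_0[OF Dspace_diff[OF D] assms])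
  then show "\<zeta> = \<eta>" by auto
qed

lemma bdd_above_abs_power_mult:
  assumes "\<zeta> \<in> Dspace a R"
  shows "bdd_above ((\<lambda>t. \<bar>t ^ a * \<zeta> t\<bar>) ` {0<..})"
  by (rule bdd_above_abs_pos_if_tendsto_at_right_0[where R = R])
    (use Dspace_tendsto_power_mult[OF assms] Dspace_beyond[OF assms]
      in \<open>auto intro!: continuous_intros Dspace_continuous_on[OF assms]\<close>)

lemma bdd_above_abs_tailint:
  assumes "\<zeta> \<in> Dspace a R"
  shows "bdd_above ((\<lambda>t. \<bar>tailint a \<zeta> t\<bar>) ` {0<..})"
proof -
  obtain L where "(tailint a \<zeta> \<longlongrightarrow> L) (at_right 0)"
    using Dspace_tailint_convergent[OF assms] by blast
  then show ?thesis
    by (intro bdd_above_abs_pos_if_tendsto_at_right_0[where R = R] tailint_vanishing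
        continuous_on_tailint[where R = R] Dspace_continuous_on[OF assms] Dspace_beyond[OF assms])
qed

lemma abs_Rmap_le_Dnorm:
  assumes "\<zeta> \<in> Dspace a R" "t > 0"
  shows "\<bar>Rmap a \<zeta> t\<bar> \<le> (1 + real a) * Dnorm a \<zeta>"
proof -
  define S1 where "S1 = (SUP t\<in>{0<..}. \<bar>t ^ a * \<zeta> t\<bar>)"
  define S2 where "S2 = (SUP t\<in>{0<..}. \<bar>tailint a \<zeta> t\<bar>)"
  have S1: "\<bar>s ^ a * \<zeta> s\<bar> \<le> S1" if "s > 0" for s
    unfolding S1_def by (rule cSUP_upper[OF _ bdd_above_abs_power_mult[OF assms(1)]]) (use that in simp)
  have S2: "\<bar>tailint a \<zeta> s\<bar> \<le> S2" if "s > 0" for s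
    unfolding S2_def by (rule cSUP_upper[OF _ bdd_above_abs_tailint[OF assms(1)]]) (use that in simp)
  have "0 \<le> S1" "0 \<le> S2" using S1[of 1] S2[of 1] by auto
  have "\<bar>Rmap a \<zeta> t\<bar> \<le> \<bar>t ^ a * \<zeta> t\<bar> + real a * \<bar>tailint a \<zeta> t\<bar>"
    unfolding Rmap_def by (simp add: abs_mult mult.commute abs_triangle_ineq[THEN order_trans])
  also have "\<dots> \<le> S1 + real a * S2"
    using S1[OF assms(2)] S2[OF assms(2)] by (intro add_mono mult_left_mono) auto
  also have "\<dots> \<le> (1 + real a) * (S1 + S2)"
    using \<open>0 \<le> S1\<close> \<open>0 \<le> S2\<close> by (simp add: algebra_simps)
  finally show ?thesis by (simp add: Dnorm_def S1_def S2_def)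
qed

lemma abs_Rext_le_Dnorm:
  assumes "\<zeta> \<in> Dspace a R" "t \<ge> 0"
  shows "\<bar>Rext a \<zeta> t\<bar> \<le> (1 + real a) * Dnorm a \<zeta>"
proof (cases "t = 0")
  case True
  have "\<forall>\<^sub>F s in at_right 0. \<bar>Rmap a \<zeta> s\<bar> \<le> (1 + real a) * Dnorm a \<zeta>"
    using eventually_at_right_less[of "0::real"]
    by (rule eventually_mono) (rule abs_Rmap_le_Dnorm[OF assms(1)])
  then have "\<bar>Rext a \<zeta> 0\<bar> \<le> (1 + real a) * Dnorm a \<zeta>"
    by (intro tendsto_upperbound[OF tendsto_rabs[OF tendsto_Rmap[OF assms(1)]]])
      (simp_all add: trivial_limit_at_right_real)
  with True show ?thesis by simp
qed (use assms abs_Rmap_le_Dnorm in \<open>auto simp: Rext_def\<close>)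

lemma supnorm_Rext_diff_le:
  assumes "\<zeta> \<in> Dspace a R" "\<eta> \<in> Dspace a R"
  shows "supnorm (\<lambda>t. Rext a \<eta> t - Rext a \<zeta> t) \<le> (1 + real a) * Dnorm a (\<lambda>t. \<eta> t - \<zeta> t)"
  unfolding supnorm_def Rext_diff[OF assms, symmetric]
  by (rule cSUP_least) (auto intro: abs_Rext_le_Dnorm[OF Dspace_diff[OF assms]])

section \<open>The inverse map\<close>

lemma
  assumes "f \<in> Ccspace R"
  shows Ccspace_continuous_on: "continuous_on {0..} f"
    and Ccspace_neg: "t < 0 \<Longrightarrow> f t = 0"
    and Ccspace_beyond: "t > R \<Longrightarrow> f t = 0"
  using assms by (auto simp: Ccspace_def)

lemma Ccspace_diff: "g \<in> Ccspace R \<Longrightarrow> f \<in> Ccspace R \<Longrightarrow> (\<lambda>t. g t - f t) \<in> Ccspace R"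
  by (auto simp: Ccspace_def intro!: continuous_intros)

lemma tendsto_Ccspace_at_right_0: "f \<in> Ccspace R \<Longrightarrow> (f \<longlongrightarrow> f 0) (at_right 0)"
  using Ccspace_continuous_on[of f R]
  by (simp add: continuous_on_eq_continuous_within continuous_within at_within_Ici_at_right[symmetric])

lemma bdd_above_abs_Ccspace:
  assumes "f \<in> Ccspace R"
  shows "bdd_above ((\<lambda>t. \<bar>f t\<bar>) ` {0..})"
proof -
  have "compact (f ` {0..R})"
    by (intro compact_continuous_image continuous_on_subset[OF Ccspace_continuous_on[OF assms]]) auto
  then obtain B where B: "\<And>t. t \<in> {0..R} \<Longrightarrow> \<bar>f t\<bar> \<le> B"
    using compact_imp_bounded by (fastforce simp: bounded_iff)
  have "\<bar>f t\<bar> \<le> max B 0" if "t \<ge> 0" for t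
    using B[of t] Ccspace_beyond[OF assms, of t] that by fastforce
  then show ?thesis by (intro bdd_aboveI2) simp
qed

definition inv_tail :: "nat \<Rightarrow> (real \<Rightarrow> real) \<Rightarrow> real \<Rightarrow> real" where
  "inv_tail a f t = integral {t..} (\<lambda>s. f s / s ^ (a + 1))"

definition Rinv :: "nat \<Rightarrow> (real \<Rightarrow> real) \<Rightarrow> real \<Rightarrow> real" where
  "Rinv a f t = (if t > 0 then f t / t ^ a - real a * inv_tail a f t else 0)"

lemma continuous_on_inv_tail_integrand:
  "f \<in> Ccspace R \<Longrightarrow> continuous_on {0<..} (\<lambda>s. f s / s ^ (a + 1))"
  by (intro continuous_intros continuous_on_subset[OF Ccspace_continuous_on]) auto

lemma has_real_derivative_inv_tail:
  assumes "f \<in> Ccspace R" "t > 0"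
  shows "(inv_tail a f has_real_derivative - (f t / t ^ (a + 1))) (at t)"
  unfolding inv_tail_def[abs_def]
  by (rule has_real_derivative_integral_Ici[where R = R])
    (use assms continuous_on_inv_tail_integrand Ccspace_beyond in auto)

lemma inv_tail_vanishing: "f \<in> Ccspace R \<Longrightarrow> t > R \<Longrightarrow> inv_tail a f t = 0"
  unfolding inv_tail_def by (rule integral_Ici_vanishing[where R = R]) (auto simp: Ccspace_beyond)

lemma inv_tail_diff:
  assumes "g \<in> Ccspace R" "f \<in> Ccspace R" "t > 0"
  shows "inv_tail a (\<lambda>t. g t - f t) t = inv_tail a g t - inv_tail a f t"
proof -
  have integrable: "(\<lambda>s. h s / s ^ (a + 1)) integrable_on {t..}" if "h \<in> Ccspace R" for h
    by (rule integrable_Ici_if_vanishing[where R = R])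
      (use that assms(3) continuous_on_inv_tail_integrand Ccspace_beyond in auto)
  have "integral {t..} (\<lambda>s. g s / s ^ (a + 1) - f s / s ^ (a + 1))
      = integral {t..} (\<lambda>s. g s / s ^ (a + 1)) - integral {t..} (\<lambda>s. f s / s ^ (a + 1))"
    by (rule integral_diff[OF integrable[OF assms(1)] integrable[OF assms(2)]])
  then show ?thesis
    unfolding inv_tail_def by (simp add: diff_divide_distrib)
qed

lemma tendsto_power_mult_inv_tail:
  assumes f: "f \<in> Ccspace R" and "a \<ge> 1"
  shows "((\<lambda>t. t ^ a * inv_tail a f t) \<longlongrightarrow> f 0 / real a) (at_right 0)"
proof -
  have "((\<lambda>t. t ^ a) \<longlongrightarrow> 0) (at_right (0::real))"
    using \<open>a \<ge> 1\<close> by (intro tendsto_eq_intros) auto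
  then have "LIM t at_right 0. inverse ((t::real) ^ a) :> at_top"
    by (rule filterlim_inverse_at_top)
      (use eventually_at_right_less[of "0::real"] in \<open>auto elim: eventually_mono\<close>)
  then have "((\<lambda>t. inv_tail a f t / inverse (t ^ a)) \<longlongrightarrow> f 0 / real a) (at_right 0)"
  proof (rule lhopital_right_at_top)
    show "\<forall>\<^sub>F t in at_right 0. - (real a / t ^ (a + 1)) \<noteq> 0"
      using eventually_at_right_less[of "0::real"] by (rule eventually_mono) (use \<open>a \<ge> 1\<close> in auto)
    show "\<forall>\<^sub>F t in at_right 0. (inv_tail a f has_real_derivative - (f t / t ^ (a + 1))) (at t)"
      using eventually_at_right_less[of "0::real"]
      by (rule eventually_mono) (rule has_real_derivative_inv_tail[OF f])
    show "\<forall>\<^sub>F t in at_right 0. ((\<lambda>t. inverse (t ^ a)) has_real_derivative - (real a / t ^ (a + 1))) (at t)"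
      using eventually_at_right_less[of "0::real"] by (rule eventually_mono) (rule DERIV_inverse_power, simp)
    have "((\<lambda>t. f t / real a) \<longlongrightarrow> f 0 / real a) (at_right 0)"
      using \<open>a \<ge> 1\<close> by (intro tendsto_intros tendsto_Ccspace_at_right_0[OF f]) simp
    moreover have "\<forall>\<^sub>F t in at_right 0. f t / real a = - (f t / t ^ (a + 1)) / - (real a / t ^ (a + 1))"
      using eventually_at_right_less[of "0::real"] by (rule eventually_mono) (use \<open>a \<ge> 1\<close> in simp)
    ultimately show "((\<lambda>t. - (f t / t ^ (a + 1)) / - (real a / t ^ (a + 1))) \<longlongrightarrow> f 0 / real a) (at_right 0)"
      by (rule Lim_transform_eventually)
  qed
  then show ?thesis by (simp add: divide_inverse mult.commute)
qed

lemma continuous_on_Rinv: "f \<in> Ccspace R \<Longrightarrow> continuous_on {0<..} (Rinv a f)"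
proof -
  assume f: "f \<in> Ccspace R"
  have "continuous_on {0<..} (inv_tail a f)"
    by (intro continuous_at_imp_continuous_on ballI DERIV_isCont[OF has_real_derivative_inv_tail[OF f]]) auto
  then have "continuous_on {0<..} (\<lambda>t. f t / t ^ a - real a * inv_tail a f t)"
    by (intro continuous_intros continuous_on_subset[OF Ccspace_continuous_on[OF f]]) auto
  then show ?thesis by (rule continuous_on_eq) (auto simp: Rinv_def)
qed

lemma Rinv_vanishing: "f \<in> Ccspace R \<Longrightarrow> t > R \<Longrightarrow> Rinv a f t = 0"
  by (simp add: Rinv_def Ccspace_beyond inv_tail_vanishing)

lemma tailint_Rinv:
  assumes f: "f \<in> Ccspace R" and "a \<ge> 1" "t > 0"
  shows "tailint a (Rinv a f) t = t ^ a * inv_tail a f t"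
proof -
  have "tailint a (Rinv a f) t - t ^ a * inv_tail a f t = 0"
  proof (rule eq_0_if_DERIV_0_and_vanishing
      [where h = "\<lambda>s. tailint a (Rinv a f) s - s ^ a * inv_tail a f s" and R = R])
    fix s :: real assume "s > 0"
    have "((\<lambda>s. tailint a (Rinv a f) s - s ^ a * inv_tail a f s) has_real_derivative
        - (Rinv a f s * s ^ (a - 1)) - (s ^ a * - (f s / s ^ (a + 1)) + real a * s ^ (a - Suc 0) * inv_tail a f s))
        (at s)"
      by (intro DERIV_diff DERIV_mult' DERIV_pow has_real_derivative_inv_tail[OF f \<open>s > 0\<close>]
          has_real_derivative_tailint[where R = R] continuous_on_Rinv[OF f] Rinv_vanishing[OF f] \<open>s > 0\<close>)
    moreover have "- (Rinv a f s * s ^ (a - 1))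
        - (s ^ a * - (f s / s ^ (a + 1)) + real a * s ^ (a - Suc 0) * inv_tail a f s) = 0"
      using \<open>a \<ge> 1\<close> \<open>s > 0\<close> by (cases a) (auto simp: Rinv_def field_simps)
    ultimately show "((\<lambda>s. tailint a (Rinv a f) s - s ^ a * inv_tail a f s) has_real_derivative 0) (at s)"
      by simp
  qed (use assms tailint_vanishing[of R "Rinv a f"] Rinv_vanishing inv_tail_vanishing in auto)
  then show ?thesis by simp
qed

lemma Rinv_in_Dspace:
  assumes f: "f \<in> Ccspace R" and "a \<ge> 1"
  shows "Rinv a f \<in> Dspace a R"
proof -
  have "((\<lambda>t. f t - real a * (t ^ a * inv_tail a f t)) \<longlongrightarrow> f 0 - real a * (f 0 / real a)) (at_right 0)"
    by (intro tendsto_intros tendsto_Ccspace_at_right_0[OF f] tendsto_power_mult_inv_tail[OF assms])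
  moreover have "\<forall>\<^sub>F t in at_right 0. f t - real a * (t ^ a * inv_tail a f t) = t ^ a * Rinv a f t"
    using eventually_at_right_less[of "0::real"] by (rule eventually_mono) (simp add: Rinv_def field_simps)
  ultimately have "((\<lambda>t. t ^ a * Rinv a f t) \<longlongrightarrow> 0) (at_right 0)"
    using \<open>a \<ge> 1\<close> by (auto dest: Lim_transform_eventually)
  moreover have "(tailint a (Rinv a f) \<longlongrightarrow> f 0 / real a) (at_right 0)"
    using tendsto_power_mult_inv_tail[OF assms] by (rule Lim_transform_eventually)
      (use eventually_at_right_less[of "0::real"] in \<open>auto elim!: eventually_mono simp: tailint_Rinv[OF assms]\<close>)
  ultimately show ?thesis
    using continuous_on_Rinv[OF f] Rinv_vanishing[OF f] unfolding Dspace_def by (auto simp: Rinv_def)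
qed

lemma Rext_Rinv:
  assumes f: "f \<in> Ccspace R" and "a \<ge> 1"
  shows "Rext a (Rinv a f) = f"
proof (rule Rext_eqI)
  show "Rmap a (Rinv a f) t = f t" if "t > 0" for t
    using that by (simp add: Rmap_def tailint_Rinv[OF assms that] Rinv_def field_simps)
qed (use tendsto_Ccspace_at_right_0[OF f] Ccspace_neg[OF f] in auto)

lemma bij_betw_Rext:
  assumes "a \<ge> 1" "R \<ge> 0"
  shows "bij_betw (Rext a) (Dspace a R) (Ccspace R)"
  unfolding bij_betw_def
proof (intro conjI inj_on_Rext[OF assms(1)] equalityI subsetI)
  show "f \<in> Ccspace R" if "f \<in> Rext a ` Dspace a R" for f
    using that Rext_in_Ccspace[OF _ assms(2)] by blast
  show "f \<in> Rext a ` Dspace a R" if "f \<in> Ccspace R" for f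
    using Rext_Rinv[OF that assms(1)] Rinv_in_Dspace[OF that assms(1)] by (metis image_eqI)
qed

lemma the_inv_into_Rext:
  assumes "f \<in> Ccspace R" "a \<ge> 1"
  shows "the_inv_into (Dspace a R) (Rext a) f = Rinv a f"
  by (rule the_inv_into_f_eq[OF inj_on_Rext Rext_Rinv Rinv_in_Dspace]) (use assms in auto)

lemma Rinv_diff:
  assumes "g \<in> Ccspace R" "f \<in> Ccspace R"
  shows "Rinv a (\<lambda>t. g t - f t) = (\<lambda>t. Rinv a g t - Rinv a f t)"
  by (auto simp: Rinv_def inv_tail_diff[OF assms] diff_divide_distrib right_diff_distrib)

lemma abs_power_mult_inv_tail_le:
  assumes h: "h \<in> Ccspace R" and "a \<ge> 1" and M: "\<And>s. s \<ge> 0 \<Longrightarrow> \<bar>h s\<bar> \<le> M" and "t > 0"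
  shows "\<bar>t ^ a * inv_tail a h t\<bar> \<le> M / real a"
proof -
  define b where "b = max R t + 1"
  have "M \<ge> 0" using M[of 0] by simp
  have "\<bar>inv_tail a h t\<bar> \<le> M / real a * inverse (t ^ a)"
  proof (rule abs_le_if_DERIV_dominated[where F = "inv_tail a h" and F' = "\<lambda>s. - (h s / s ^ (a + 1))"
        and G = "\<lambda>s. M / real a * inverse (s ^ a)" and G' = "\<lambda>s. M / real a * - (real a / s ^ (a + 1))"
        and b = b])
    fix s assume "t \<le> s"
    then have "s > 0" using \<open>t > 0\<close> by simp
    show "(inv_tail a h has_real_derivative - (h s / s ^ (a + 1))) (at s)"
      by (rule has_real_derivative_inv_tail[OF h \<open>s > 0\<close>])
    show "((\<lambda>s. M / real a * inverse (s ^ a)) has_real_derivative M / real a * - (real a / s ^ (a + 1))) (at s)"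
      using \<open>s > 0\<close> by (intro DERIV_cmult DERIV_inverse_power) simp
    have "\<bar>h s\<bar> / s ^ (a + 1) \<le> M / s ^ (a + 1)"
      using M[of s] \<open>s > 0\<close> by (simp add: divide_right_mono)
    then show "\<bar>- (h s / s ^ (a + 1))\<bar> \<le> - (M / real a * - (real a / s ^ (a + 1)))"
      using \<open>a \<ge> 1\<close> \<open>s > 0\<close> by (simp add: abs_divide)
  next
    show "inv_tail a h b = 0" by (rule inv_tail_vanishing[OF h]) (simp add: b_def)
  qed (use \<open>M \<ge> 0\<close> \<open>t > 0\<close> in \<open>auto simp: b_def\<close>)
  then have "t ^ a * \<bar>inv_tail a h t\<bar> \<le> t ^ a * (M / real a * inverse (t ^ a))"
    by (rule mult_left_mono) (use \<open>t > 0\<close> in simp)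
  then have "\<bar>t ^ a * inv_tail a h t\<bar> \<le> t ^ a * (M / real a * inverse (t ^ a))"
    using \<open>t > 0\<close> by (simp add: abs_mult)
  also have "\<dots> = M / real a"
    using \<open>t > 0\<close> by simp
  finally show ?thesis .
qed

lemma Dnorm_Rinv_le:
  assumes h: "h \<in> Ccspace R" and "a \<ge> 1" and M: "\<And>t. t \<ge> 0 \<Longrightarrow> \<bar>h t\<bar> \<le> M"
  shows "Dnorm a (Rinv a h) \<le> 3 * M"
proof -
  have "M \<ge> 0" using M[of 0] by simp
  then have "M / real a \<le> M"
    using \<open>a \<ge> 1\<close> by (simp add: divide_le_eq mult_le_cancel_left1)
  have "\<bar>t ^ a * Rinv a h t\<bar> \<le> 2 * M" if "t > 0" for t
  proof -
    have "t ^ a * Rinv a h t = h t - real a * (t ^ a * inv_tail a h t)"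
      using that by (simp add: Rinv_def field_simps)
    also have "\<bar>\<dots>\<bar> \<le> \<bar>h t\<bar> + real a * \<bar>t ^ a * inv_tail a h t\<bar>"
      using abs_triangle_ineq4[of "h t" "real a * (t ^ a * inv_tail a h t)"] by (simp add: abs_mult)
    also have "\<dots> \<le> M + real a * (M / real a)"
      using M[of t] that abs_power_mult_inv_tail_le[OF h \<open>a \<ge> 1\<close> M that]
      by (intro add_mono mult_left_mono) auto
    also have "\<dots> = 2 * M" using \<open>a \<ge> 1\<close> by simp
    finally show ?thesis .
  qed
  then have "(SUP t\<in>{0<..}. \<bar>t ^ a * Rinv a h t\<bar>) \<le> 2 * M"
    by (intro cSUP_least) auto
  moreover have "(SUP t\<in>{0<..}. \<bar>tailint a (Rinv a h) t\<bar>) \<le> M"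
    using tailint_Rinv[OF h \<open>a \<ge> 1\<close>] abs_power_mult_inv_tail_le[OF h \<open>a \<ge> 1\<close> M] \<open>M / real a \<le> M\<close>
    by (intro cSUP_least) force+
  ultimately show ?thesis unfolding Dnorm_def by linarith
qed

lemma Dnorm_Rinv_diff_le:
  assumes "g \<in> Ccspace R" "f \<in> Ccspace R" "a \<ge> 1"
  shows "Dnorm a (\<lambda>t. Rinv a g t - Rinv a f t) \<le> 3 * supnorm (\<lambda>t. g t - f t)"
  unfolding Rinv_diff[OF assms(1,2), symmetric]
proof (rule Dnorm_Rinv_le[OF Ccspace_diff[OF assms(1,2)] assms(3)])
  show "\<bar>g t - f t\<bar> \<le> supnorm (\<lambda>t. g t - f t)" if "t \<ge> 0" for t
    unfolding supnorm_def
    by (rule cSUP_upper[OF _ bdd_above_abs_Ccspace[OF Ccspace_diff[OF assms(1,2)]]]) (use that in simp)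
qed

theorem lemma3p5:
  fixes a :: nat and R :: real
  assumes "a \<ge> 1" and "R > 0"
  shows "(\<forall>\<zeta>\<in>Dspace a R. (Rmap a \<zeta> \<longlongrightarrow> Rext a \<zeta> 0) (at_right 0)
            \<and> Rext a \<zeta> \<in> Ccspace R)
       \<and> (\<forall>\<zeta>\<in>Dspace a R. \<forall>\<eta>\<in>Dspace a R. \<forall>c::real.
            Rext a (\<lambda>t. c * \<zeta> t + \<eta> t) = (\<lambda>t. c * Rext a \<zeta> t + Rext a \<eta> t))
       \<and> bij_betw (Rext a) (Dspace a R) (Ccspace R)
       \<and> (\<forall>\<zeta>\<in>Dspace a R. \<forall>\<epsilon>>0. \<exists>\<delta>>0. \<forall>\<eta>\<in>Dspace a R.
            Dnorm a (\<lambda>t. \<eta> t - \<zeta> t) < \<delta> \<longrightarrow>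
            supnorm (\<lambda>t. Rext a \<eta> t - Rext a \<zeta> t) < \<epsilon>)
       \<and> (\<forall>f\<in>Ccspace R. \<forall>\<epsilon>>0. \<exists>\<delta>>0. \<forall>g\<in>Ccspace R.
            supnorm (\<lambda>t. g t - f t) < \<delta> \<longrightarrow>
            Dnorm a (\<lambda>t. the_inv_into (Dspace a R) (Rext a) g t
                          - the_inv_into (Dspace a R) (Rext a) f t) < \<epsilon>)"
proof (intro conjI ballI allI impI)
  fix \<zeta> assume "\<zeta> \<in> Dspace a R"
  then show "(Rmap a \<zeta> \<longlongrightarrow> Rext a \<zeta> 0) (at_right 0)" "Rext a \<zeta> \<in> Ccspace R"
    using tendsto_Rmap Rext_in_Ccspace \<open>R > 0\<close> by auto
next
  fix \<zeta> \<eta> c assume "\<zeta> \<in> Dspace a R" "\<eta> \<in> Dspace a R"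
  then show "Rext a (\<lambda>t. c * \<zeta> t + \<eta> t) = (\<lambda>t. c * Rext a \<zeta> t + Rext a \<eta> t)"
    by (rule Rext_lincomb)
next
  show "bij_betw (Rext a) (Dspace a R) (Ccspace R)"
    using assms by (intro bij_betw_Rext) auto
next
  fix \<zeta> and \<epsilon> :: real assume "\<zeta> \<in> Dspace a R" "\<epsilon> > 0"
  then show "\<exists>\<delta>>0. \<forall>\<eta>\<in>Dspace a R. Dnorm a (\<lambda>t. \<eta> t - \<zeta> t) < \<delta> \<longrightarrow>
      supnorm (\<lambda>t. Rext a \<eta> t - Rext a \<zeta> t) < \<epsilon>"
    by (intro ex_delta_if_le_mult[where K = "1 + real a"] supnorm_Rext_diff_le) auto
next
  fix f and \<epsilon> :: real assume f: "f \<in> Ccspace R" and "\<epsilon> > 0"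
  have "Dnorm a (\<lambda>t. the_inv_into (Dspace a R) (Rext a) g t - the_inv_into (Dspace a R) (Rext a) f t)
      \<le> 3 * supnorm (\<lambda>t. g t - f t)" if "g \<in> Ccspace R" for g
    using Dnorm_Rinv_diff_le[OF that f \<open>a \<ge> 1\<close>]
    by (simp add: the_inv_into_Rext[OF that \<open>a \<ge> 1\<close>] the_inv_into_Rext[OF f \<open>a \<ge> 1\<close>])
  then show "\<exists>\<delta>>0. \<forall>g\<in>Ccspace R. supnorm (\<lambda>t. g t - f t) < \<delta> \<longrightarrow>
      Dnorm a (\<lambda>t. the_inv_into (Dspace a R) (Rext a) g t - the_inv_into (Dspace a R) (Rext a) f t) < \<epsilon>"
    using \<open>\<epsilon> > 0\<close> by (intro ex_delta_if_le_mult[where K = 3]) auto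
qed

end
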